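(* Let $G$ be a finite abelian group, let $B\subseteq G$ be a regular Bohr set of rank $d$, and let $A\subseteq B$ have relative density $\mu_B(A)=\alpha$. Let $C>0$ be a constant such that $|B|\ge(1-\frac1{20})|B_{1+\delta}|$, where $\delta=1/(Cd)$, and let $B',B''\subseteq B_\delta$ be nonempty. Then either (1) there is an $x\in G$ such that $1_A*\mu_{B'}(x)\ge\frac{8}{10}\alpha$ and $1_A*\mu_{B''}(x)\ge\frac{8}{10}\alpha$; or (2) $\|1_A*\mu_{B'}\|_\infty\ge1.1\alpha$ or $\|1_A*\mu_{B''}\|_\infty\ge1.1\alpha$.
   Context: For a finite abelian group $G$ with dual group $\widehat G$, a Bohr set with generating set $\Gamma\subseteq\widehat G$ and radius $\rho\ge0$ is $B(\Gamma,\rho)=\{x\in G:|1-\gamma(x)|\le\rho\text{ for all }\gamma\in\Gamma\}$; its rank is $|\Gamma|$. For $B=B(\Gamma,\rho)$ and $\delta>0$, $B_\delta:=B(\Gamma,\delta\rho)$. A Bohr set $B$ of rank $d$ is regular if for all $|\delta|\le1/(100d)$, $(1-100d|\delta|)|B|\le|B_{1+\delta}|\le(1+100d|\delta|)|B|$. $\mu_B(A)=|A\cap B|/|B|$, $\mu_T=1_T/|T|$, $f*g(x)=\sum_yf(y)g(x-y)$, $\|f\|_\infty=\sup_x|f(x)|$. *)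

theory Defs
  imports Complex_Main
begin

definition dual_group :: "('a::{ab_group_add,finite} \<Rightarrow> complex) set" where
  "dual_group = {\<gamma>. (\<forall>x y. \<gamma> (x + y) = \<gamma> x * \<gamma> y) \<and> (\<forall>x. norm (\<gamma> x) = 1)}"

definition bohr :: "('a::{ab_group_add,finite} \<Rightarrow> complex) set \<Rightarrow> real \<Rightarrow> 'a set" where
  "bohr \<Gamma> \<rho> = {x. \<forall>\<gamma>\<in>\<Gamma>. norm (1 - \<gamma> x) \<le> \<rho>}"

definition regular_bohr :: "('a::{ab_group_add,finite} \<Rightarrow> complex) set \<Rightarrow> real \<Rightarrow> bool" where
  "regular_bohr \<Gamma> \<rho> \<longleftrightarrow>
     (\<forall>\<delta>::real. \<bar>\<delta>\<bar> \<le> 1 / (100 * real (card \<Gamma>)) \<longrightarrow>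
        (1 - 100 * real (card \<Gamma>) * \<bar>\<delta>\<bar>) * real (card (bohr \<Gamma> \<rho>))
          \<le> real (card (bohr \<Gamma> ((1 + \<delta>) * \<rho>))) \<and>
        real (card (bohr \<Gamma> ((1 + \<delta>) * \<rho>)))
          \<le> (1 + 100 * real (card \<Gamma>) * \<bar>\<delta>\<bar>) * real (card (bohr \<Gamma> \<rho>)))"

definition ind :: "'a set \<Rightarrow> 'a \<Rightarrow> real" where
  "ind S x = (if x \<in> S then 1 else 0)"

definition unif :: "'a set \<Rightarrow> 'a \<Rightarrow> real" where
  "unif T x = ind T x / real (card T)"

definition conv :: "('a::{ab_group_add,finite} \<Rightarrow> real) \<Rightarrow> ('a \<Rightarrow> real) \<Rightarrow> 'a \<Rightarrow> real" where
  "conv f g x = (\<Sum>y\<in>UNIV. f y * g (x - y))"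

definition sup_norm :: "('a::finite \<Rightarrow> real) \<Rightarrow> real" where
  "sup_norm f = Max (range (\<lambda>x. \<bar>f x\<bar>))"

end

theory Submission
  imports Defs
begin

(* Both f = 1_A * mu_B' and g = 1_A * mu_B'' have total mass |A| = alpha |B| and are supported
   on A + B_delta, which lies in B_{1+delta}. Hence f + g has average at least
   2 alpha |B| / |B_{1+delta}| >= 1.9 alpha on B_{1+delta}, so f x + g x >= 1.9 alpha at some x.
   There either one of the two values is at least 1.1 alpha, or both are above 0.8 alpha. *)

lemma dual_group_zero:
  assumes "\<gamma> \<in> dual_group"
  shows "\<gamma> 0 = 1"
proof -
  have "\<gamma> 0 * \<gamma> 0 = \<gamma> 0 * 1" and "\<gamma> 0 \<noteq> 0"
    using assms unfolding dual_group_def by (auto dest: spec[of _ 0])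
  then show ?thesis by (metis mult_left_cancel)
qed

lemma zero_in_bohr:
  assumes "\<Gamma> \<subseteq> dual_group" and "0 \<le> r"
  shows "0 \<in> bohr \<Gamma> r"
  unfolding bohr_def
proof (intro CollectI ballI)
  fix \<gamma> assume "\<gamma> \<in> \<Gamma>"
  then have "\<gamma> 0 = 1"
    using assms(1) dual_group_zero by blast
  then show "norm (1 - \<gamma> 0) \<le> r"
    using assms(2) by simp
qed

lemma bohr_add:
  assumes "\<Gamma> \<subseteq> dual_group" and "x \<in> bohr \<Gamma> r" and "y \<in> bohr \<Gamma> s"
  shows "x + y \<in> bohr \<Gamma> (r + s)"
  unfolding bohr_def
proof (intro CollectI ballI)
  fix \<gamma> assume "\<gamma> \<in> \<Gamma>"
  then have hom: "\<gamma> (x + y) = \<gamma> x * \<gamma> y" and unit: "norm (\<gamma> x) = 1"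
    using assms(1) unfolding dual_group_def by auto
  have "norm (1 - \<gamma> (x + y)) = norm ((1 - \<gamma> x) + \<gamma> x * (1 - \<gamma> y))"
    using hom by (simp add: algebra_simps)
  also have "\<dots> \<le> norm (1 - \<gamma> x) + norm (1 - \<gamma> y)"
    using norm_triangle_ineq[of "1 - \<gamma> x" "\<gamma> x * (1 - \<gamma> y)"] unit by (simp add: norm_mult)
  also have "\<dots> \<le> r + s"
    using \<open>\<gamma> \<in> \<Gamma>\<close> assms(2,3) unfolding bohr_def by (auto intro: add_mono)
  finally show "norm (1 - \<gamma> (x + y)) \<le> r + s" .
qed

lemma sum_conv: "(\<Sum>x\<in>UNIV. conv f g x) = (\<Sum>y\<in>UNIV. f y) * (\<Sum>z\<in>UNIV. g z)"
proof -
  have "(\<Sum>x\<in>UNIV. conv f g x) = (\<Sum>y\<in>UNIV. f y * (\<Sum>x\<in>UNIV. g (x - y)))"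
    unfolding conv_def by (subst sum.swap) (simp add: sum_distrib_left)
  also have "\<dots> = (\<Sum>y\<in>UNIV. f y * (\<Sum>z\<in>UNIV. g z))"
    using sum.reindex_bij_betw[OF bij_diff_right, of g] by simp
  finally show ?thesis by (simp add: sum_distrib_right)
qed

lemma sum_ind: "(\<Sum>x\<in>UNIV. ind S x) = real (card (S :: 'a::finite set))"
  unfolding ind_def by (simp add: sum.If_cases)

lemma sum_unif:
  fixes S :: "'a::finite set"
  assumes "S \<noteq> {}"
  shows "(\<Sum>x\<in>UNIV. unif S x) = 1"
  using assms sum_ind[of S] by (simp add: unif_def flip: sum_divide_distrib)

lemma conv_ind_unif_eq_zero:
  assumes "\<And>a s. a \<in> A \<Longrightarrow> s \<in> S \<Longrightarrow> a + s \<in> P" and "x \<notin> P"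
  shows "conv (ind A) (unif S) x = 0"
  unfolding conv_def
proof (rule sum.neutral, intro ballI)
  fix y
  have "\<not> (y \<in> A \<and> x - y \<in> S)"
    using assms by (metis add.commute diff_add_cancel)
  then show "ind A y * unif S (x - y) = 0"
    by (auto simp: ind_def unif_def)
qed

lemma sum_conv_ind_unif:
  assumes "\<And>a s. a \<in> A \<Longrightarrow> s \<in> S \<Longrightarrow> a + s \<in> P" and "S \<noteq> {}"
  shows "(\<Sum>x\<in>P. conv (ind A) (unif S) x) = real (card A)"
proof -
  have "(\<Sum>x\<in>P. conv (ind A) (unif S) x) = (\<Sum>x\<in>UNIV. conv (ind A) (unif S) x)"
    using conv_ind_unif_eq_zero[OF assms(1)] by (intro sum.mono_neutral_left) auto
  also have "\<dots> = real (card A)"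
    using assms(2) by (simp add: sum_conv sum_ind sum_unif)
  finally show ?thesis .
qed

lemma le_sup_norm: "f x \<le> sup_norm (f :: 'a::finite \<Rightarrow> real)"
proof -
  have "\<bar>f x\<bar> \<le> sup_norm f"
    unfolding sup_norm_def by (rule Max_ge) auto
  then show ?thesis by simp
qed

lemma exists_ge_average:
  fixes h :: "'a \<Rightarrow> real"
  assumes "finite P" and "P \<noteq> {}" and "real (card P) * c \<le> (\<Sum>x\<in>P. h x)"
  shows "\<exists>x\<in>P. c \<le> h x"
  using sum_bounded_above_strict[of P h c] assms by (force simp: card_gt_0_iff)

theorem lemma5p3:
  fixes \<Gamma> :: "('a::{ab_group_add,finite} \<Rightarrow> complex) set"
    and \<rho> \<alpha> C :: real and d :: nat and A B' B'' :: "'a set"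
  assumes "\<Gamma> \<subseteq> dual_group" and "\<rho> \<ge> 0" and "card \<Gamma> = d"
    and "regular_bohr \<Gamma> \<rho>"
    and "A \<subseteq> bohr \<Gamma> \<rho>"
    and "\<alpha> = real (card (A \<inter> bohr \<Gamma> \<rho>)) / real (card (bohr \<Gamma> \<rho>))"
    and "C > 0"
    and "real (card (bohr \<Gamma> \<rho>)) \<ge> (1 - 1/20) * real (card (bohr \<Gamma> ((1 + 1 / (C * real d)) * \<rho>)))"
    and "B' \<subseteq> bohr \<Gamma> ((1 / (C * real d)) * \<rho>)" and "B' \<noteq> {}"
    and "B'' \<subseteq> bohr \<Gamma> ((1 / (C * real d)) * \<rho>)" and "B'' \<noteq> {}"
  shows "(\<exists>x. conv (ind A) (unif B') x \<ge> 8/10 * \<alpha> \<and> conv (ind A) (unif B'') x \<ge> 8/10 * \<alpha>)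
         \<or> sup_norm (conv (ind A) (unif B')) \<ge> 1.1 * \<alpha>
         \<or> sup_norm (conv (ind A) (unif B'')) \<ge> 1.1 * \<alpha>"
proof -
  define \<delta> where "\<delta> = 1 / (C * real d)"
  define B where "B = bohr \<Gamma> \<rho>"
  define P where "P = bohr \<Gamma> ((1 + \<delta>) * \<rho>)"
  define f where "f = conv (ind A) (unif B')"
  define g where "g = conv (ind A) (unif B'')"
  have "a + s \<in> P" if "a \<in> A" and "s \<in> bohr \<Gamma> (\<delta> * \<rho>)" for a s
    using bohr_add[OF assms(1), of a \<rho> s "\<delta> * \<rho>"] that assms(5)
    unfolding P_def by (auto simp: algebra_simps)
  then have "(\<Sum>x\<in>P. f x) + (\<Sum>x\<in>P. g x) = 2 * real (card A)"
    using assms(9-12) unfolding f_def g_def \<delta>_def by (simp add: subset_iff sum_conv_ind_unif)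
  also have "\<dots> = 2 * \<alpha> * real (card B)"
    using assms(5,6) card_mono[of B A] unfolding B_def by (auto simp: Int_absorb2)
  also have "\<dots> \<ge> 2 * \<alpha> * (19/20 * real (card P))"
    using assms(6,8) unfolding B_def P_def \<delta>_def by (intro mult_left_mono) simp_all
  finally have "real (card P) * (1.9 * \<alpha>) \<le> (\<Sum>x\<in>P. f x + g x)"
    by (simp add: sum.distrib algebra_simps)
  moreover have "P \<noteq> {}"
    using zero_in_bohr[OF assms(1), of "(1 + \<delta>) * \<rho>"] assms(2,7) unfolding P_def \<delta>_def by auto
  ultimately obtain x where "1.9 * \<alpha> \<le> f x + g x"
    using exists_ge_average[of P "1.9 * \<alpha>" "\<lambda>x. f x + g x"] by auto
  then consider "1.1 * \<alpha> \<le> f x" | "1.1 * \<alpha> \<le> g x" | "8/10 * \<alpha> \<le> f x" "8/10 * \<alpha> \<le> g x"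
    by linarith
  then show ?thesis
    using le_sup_norm[of f x] le_sup_norm[of g x] unfolding f_def g_def
    by cases (linarith, linarith, blast)
qed

end
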